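(* Fix $k\ge2$, $c>0$ and $\zeta\in(0,1]$ with $\zeta(k-1)c^{k-1}<e$. Let $G=(V,E)$ be a finite $k$-uniform hypergraph with maximum degree at most $\Delta$ and let $F=F^G_{c,\zeta}$ (defined with this parameter $\Delta$). Then for all $\mathbf x,\mathbf y\in\mathbb R_{>0}^V$, $$\|\log F^2(\mathbf x)-\log F^2(\mathbf y)\|_\infty\le(1-\delta)\|\log\mathbf x-\log\mathbf y\|_\infty,\qquad \delta=1-\zeta c^{k-1}(k-1)e^{-1},$$ where $F^2=F\circ F$ and $\log$ is applied coordinatewise. In particular $F$ has a unique fixed point.
   Context: $F^G_{c,\zeta}:\mathbb R^V_{>0}\to\mathbb R^V_{>0}$ is given by $(F^G_{c,\zeta}(\mathbf x))_v=c\exp\left(-\frac{\zeta}{\Delta}\sum_{e\ni v}\prod_{u\in e\setminus\{v\}}x_u\right)$. *)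

theory Defs
  imports "HOL-Analysis.Analysis"
begin

definition uniform_hypergraph :: "nat \<Rightarrow> 'a set \<Rightarrow> 'a set set \<Rightarrow> bool" where
  "uniform_hypergraph k V E \<longleftrightarrow> finite V \<and> (\<forall>e\<in>E. e \<subseteq> V \<and> card e = k)"

definition hdeg :: "'a set set \<Rightarrow> 'a \<Rightarrow> nat" where
  "hdeg E v = card {e\<in>E. v \<in> e}"

definition posvec :: "'a set \<Rightarrow> ('a \<Rightarrow> real) set" where
  "posvec V = {x. x \<in> extensional V \<and> (\<forall>v\<in>V. x v > 0)}"

definition Fmap :: "'a set \<Rightarrow> 'a set set \<Rightarrow> real \<Rightarrow> real \<Rightarrow> nat \<Rightarrow> ('a \<Rightarrow> real) \<Rightarrow> ('a \<Rightarrow> real)" where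
  "Fmap V E c \<zeta> \<Delta> x = restrict (\<lambda>v. c * exp (- (\<zeta> / real \<Delta>) *
       (\<Sum>e\<in>{e\<in>E. v \<in> e}. \<Prod>u\<in>e - {v}. x u))) V"

definition supnorm :: "'a set \<Rightarrow> ('a \<Rightarrow> real) \<Rightarrow> real" where
  "supnorm V f = Max (insert 0 ((\<lambda>v. \<bar>f v\<bar>) ` V))"

end

theory Submission
  imports Defs
begin

text \<open>
  In logarithmic coordinates F is affine in the link sums S x v = (sum over edges e containing v
  of the product of x u over u in e - {v}): ln (F x v) = ln c - (zeta / Delta) * S x v.
  If ln x and ln y differ by at most L, then for an edge e at v the product of F x u over
  u in e - {v} equals c^(k-1) * exp (-A), where A changes by a factor at most exp ((k-1) L).
  Since s \<mapsto> exp (- exp s) is (1/e)-Lipschitz, this product moves by at most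
  c^(k-1) (k-1) L / e; summing over the at most Delta edges at v and multiplying by
  zeta / Delta gives the contraction factor of F \<circ> F. Banach's fixed point theorem for
  F \<circ> F in logarithmic coordinates yields a fixed point of F \<circ> F, which is a fixed point
  of F because F maps it to another fixed point of F \<circ> F.
\<close>

lemma mult_exp_neg_le: fixes t :: real shows "t * exp (-t) \<le> exp (-1)"
proof -
  have "t * exp (-t) \<le> exp (t - 1) * exp (-t)"
    using exp_ge_add_one_self[of "t - 1"] by (simp add: mult_right_mono)
  also have "\<dots> = exp (-1)" by (simp flip: exp_add)
  finally show ?thesis .
qed

lemma exp_neg_exp_lipschitz:
  fixes s t :: real
  shows "\<bar>exp (- exp s) - exp (- exp t)\<bar> \<le> exp (-1) * \<bar>s - t\<bar>"
proof -
  have "norm (exp (- exp s) - exp (- exp t)) \<le> exp (-1) * norm (s - t)"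
  proof (rule field_differentiable_bound[of UNIV])
    show "((\<lambda>s. exp (- exp s)) has_field_derivative - exp z * exp (- exp z)) (at z within UNIV)"
      for z :: real
      by (auto intro!: derivative_eq_intros)
    show "norm (- exp z * exp (- exp z)) \<le> exp (-1)" for z :: real
      using mult_exp_neg_le[of "exp z"] by simp
  qed auto
  then show ?thesis by simp
qed

lemma exp_neg_diff_le:
  fixes A B M :: real
  assumes "0 \<le> A" "0 \<le> B" "A \<le> B * exp M" "B \<le> A * exp M" "0 \<le> M"
  shows "\<bar>exp (-A) - exp (-B)\<bar> \<le> exp (-1) * M"
proof (cases "A = 0")
  case True
  then show ?thesis using assms by simp
next
  case False
  then have "0 < A" "0 < B" using assms by (auto simp: order_le_less)
  have "\<bar>ln A - ln B\<bar> \<le> M"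
    using assms \<open>0 < A\<close> \<open>0 < B\<close> ln_mono[of A "B * exp M"] ln_mono[of B "A * exp M"]
    by (simp add: ln_mult)
  moreover have "\<bar>exp (-A) - exp (-B)\<bar> \<le> exp (-1) * \<bar>ln A - ln B\<bar>"
    using exp_neg_exp_lipschitz[of "ln A" "ln B"] \<open>0 < A\<close> \<open>0 < B\<close> by simp
  ultimately show ?thesis
    by (meson exp_ge_zero mult_left_mono order_trans)
qed

lemma (in Metric_space) fixpoint_if_square_contraction:
  assumes "mcomplete" "M \<noteq> {}" and maps: "f \<in> M \<rightarrow> M" and "q < 1"
    and contr: "\<And>x y. \<lbrakk>x \<in> M; y \<in> M\<rbrakk> \<Longrightarrow> d (f (f x)) (f (f y)) \<le> q * d x y"
  obtains x where "x \<in> M" "f x = x"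
proof -
  have maps2: "f \<circ> f \<in> M \<rightarrow> M" using maps by (auto simp: Pi_iff)
  obtain a where a: "a \<in> M" "f (f a) = a"
    using Banach_fixedpoint_thm[OF assms(1,2) maps2 \<open>q < 1\<close>] contr by auto
  have "f a = a"
    using contraction_imp_unique_fixpoint[of "f \<circ> f" "f a" a] maps maps2 a contr \<open>q < 1\<close>
    by auto
  with a show thesis using that by blast
qed

lemma abs_le_supnorm: "finite V \<Longrightarrow> v \<in> V \<Longrightarrow> \<bar>f v\<bar> \<le> supnorm V f"
  unfolding supnorm_def by (rule Max_ge) auto

lemma supnorm_nonneg: "finite V \<Longrightarrow> 0 \<le> supnorm V f"
  unfolding supnorm_def by (rule Max_ge) auto

lemma supnorm_leI:
  "finite V \<Longrightarrow> 0 \<le> B \<Longrightarrow> (\<And>v. v \<in> V \<Longrightarrow> \<bar>f v\<bar> \<le> B) \<Longrightarrow> supnorm V f \<le> B"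
  unfolding supnorm_def by (subst Max_le_iff) auto

lemma mcomplete_real_fspace:
  "Metric_space.mcomplete (Met_TC.fspace S :: ('a \<Rightarrow> real) set) (Met_TC.fdist S)"
  by (metis Met_TC.mcomplete_funspace complete_UNIV mcomplete_iff_complete mcomplete_of_def
      Met_TC.mdist_Self mdist_funspace Met_TC.mspace_Self mspace_funspace)

lemma restrict_in_real_fspace:
  fixes g :: "'a \<Rightarrow> real"
  shows "finite S \<Longrightarrow> restrict g S \<in> Met_TC.fspace S"
  unfolding Met_TC.fspace_def by auto

definition link_sum :: "'a set set \<Rightarrow> ('a \<Rightarrow> real) \<Rightarrow> 'a \<Rightarrow> real" where
  "link_sum E x v = (\<Sum>e\<in>{e\<in>E. v \<in> e}. \<Prod>u\<in>e - {v}. x u)"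

locale hypergraph_map =
  fixes k :: nat and V :: "'a set" and E :: "'a set set" and c \<zeta> :: real and \<Delta> :: nat
  assumes uniform: "uniform_hypergraph k V E"
    and c_pos: "0 < c" and zeta_nonneg: "0 \<le> \<zeta>"
    and degree_le: "\<And>v. v \<in> V \<Longrightarrow> hdeg E v \<le> \<Delta>"
begin

abbreviation F :: "('a \<Rightarrow> real) \<Rightarrow> 'a \<Rightarrow> real" where
  "F \<equiv> Fmap V E c \<zeta> \<Delta>"

definition rate :: real where
  "rate = \<zeta> * c ^ (k - 1) * real (k - 1) * exp (-1)"

lemma rate_nonneg: "0 \<le> rate"
  using c_pos zeta_nonneg by (simp add: rate_def)

lemma finite_V: "finite V"
  using uniform by (simp add: uniform_hypergraph_def)

lemma edge_subset: "e \<in> E \<Longrightarrow> e \<subseteq> V"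
  using uniform by (simp add: uniform_hypergraph_def)

lemma card_edge_minus: "e \<in> E \<Longrightarrow> v \<in> e \<Longrightarrow> card (e - {v}) = k - 1"
  using uniform finite_V edge_subset
  by (simp add: uniform_hypergraph_def card_Diff_singleton)

lemma link_sum_cong: "(\<And>u. u \<in> V \<Longrightarrow> x u = y u) \<Longrightarrow> link_sum E x v = link_sum E y v"
  unfolding link_sum_def using edge_subset by (intro sum.cong refl prod.cong) auto

lemma F_link_sum: "F x = restrict (\<lambda>v. c * exp (- (\<zeta> / real \<Delta>) * link_sum E x v)) V"
  unfolding Fmap_def link_sum_def ..

lemma F_eq: "v \<in> V \<Longrightarrow> F x v = c * exp (- (\<zeta> / real \<Delta>) * link_sum E x v)"
  by (simp add: F_link_sum)

lemma F_cong: "(\<And>u. u \<in> V \<Longrightarrow> x u = y u) \<Longrightarrow> F x = F y"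
  unfolding F_link_sum by (metis link_sum_cong)

lemma F_pos: "v \<in> V \<Longrightarrow> 0 < F x v"
  using F_eq c_pos by simp

lemma ln_F: "v \<in> V \<Longrightarrow> ln (F x v) = ln c - (\<zeta> / real \<Delta>) * link_sum E x v"
  using F_eq c_pos by (simp add: ln_mult)

lemma link_sum_nonneg: "(\<And>u. u \<in> V \<Longrightarrow> 0 < x u) \<Longrightarrow> 0 \<le> link_sum E x v"
  unfolding link_sum_def using edge_subset
  by (intro sum_nonneg prod_nonneg) (auto intro: less_imp_le)

lemma link_sum_le_exp:
  assumes x: "\<And>u. u \<in> V \<Longrightarrow> 0 < x u" and y: "\<And>u. u \<in> V \<Longrightarrow> 0 < y u"
    and L: "\<And>u. u \<in> V \<Longrightarrow> ln (x u) - ln (y u) \<le> L"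
  shows "link_sum E x v \<le> link_sum E y v * exp (real (k - 1) * L)"
proof -
  have x_le: "x u \<le> y u * exp L" if "u \<in> V" for u
  proof -
    have "x u = exp (ln (x u))" using x[OF that] by simp
    also have "\<dots> \<le> exp (ln (y u) + L)" using L[OF that] by simp
    finally show ?thesis using y[OF that] by (simp add: exp_add)
  qed
  have "(\<Prod>u\<in>e - {v}. x u) \<le> (\<Prod>u\<in>e - {v}. y u) * exp (real (k - 1) * L)"
    if e: "e \<in> E" "v \<in> e" for e
  proof -
    have "(\<Prod>u\<in>e - {v}. x u) \<le> (\<Prod>u\<in>e - {v}. y u * exp L)"
      using e edge_subset x x_le by (intro prod_mono) (auto intro: less_imp_le)
    also have "\<dots> = (\<Prod>u\<in>e - {v}. y u) * exp L ^ (k - 1)"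
      using card_edge_minus[OF e] by (simp add: prod.distrib)
    finally show ?thesis by (simp add: exp_of_nat_mult)
  qed
  then show ?thesis
    unfolding link_sum_def sum_distrib_right by (intro sum_mono) auto
qed

lemma prod_F_eq:
  assumes "e \<in> E" "v \<in> e"
  shows "(\<Prod>u\<in>e - {v}. F x u) = c ^ (k - 1) * exp (- (\<zeta> / real \<Delta> * (\<Sum>u\<in>e - {v}. link_sum E x u)))"
proof -
  have "(\<Prod>u\<in>e - {v}. F x u) = (\<Prod>u\<in>e - {v}. c * exp (- (\<zeta> / real \<Delta>) * link_sum E x u))"
    using assms edge_subset F_eq by (intro prod.cong) auto
  also have "\<dots> = c ^ (k - 1) * exp (\<Sum>u\<in>e - {v}. - (\<zeta> / real \<Delta>) * link_sum E x u)"
  proof -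
    have "finite (e - {v})"
      using finite_V edge_subset[OF assms(1)] by (meson finite_Diff finite_subset)
    then show ?thesis using card_edge_minus[OF assms] by (simp add: prod.distrib exp_sum)
  qed
  finally show ?thesis by (simp add: sum_distrib_left sum_negf)
qed

lemma prod_F_diff_le:
  assumes x: "\<And>u. u \<in> V \<Longrightarrow> 0 < x u" and y: "\<And>u. u \<in> V \<Longrightarrow> 0 < y u"
    and L: "\<And>u. u \<in> V \<Longrightarrow> \<bar>ln (x u) - ln (y u)\<bar> \<le> L" and "0 \<le> L"
    and e: "e \<in> E" "v \<in> e"
  shows "\<bar>(\<Prod>u\<in>e - {v}. F x u) - (\<Prod>u\<in>e - {v}. F y u)\<bar>
           \<le> c ^ (k - 1) * (exp (-1) * (real (k - 1) * L))"
proof -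
  define a where "a = \<zeta> / real \<Delta>"
  define A where "A = a * (\<Sum>u\<in>e - {v}. link_sum E x u)"
  define B where "B = a * (\<Sum>u\<in>e - {v}. link_sum E y u)"
  have "0 \<le> a" using zeta_nonneg by (simp add: a_def)
  have "0 \<le> A" "0 \<le> B"
    unfolding A_def B_def using \<open>0 \<le> a\<close> link_sum_nonneg x y by (simp_all add: sum_nonneg)
  moreover have "A \<le> B * exp (real (k - 1) * L)" "B \<le> A * exp (real (k - 1) * L)"
    unfolding A_def B_def mult.assoc sum_distrib_right
    using L link_sum_le_exp[OF x y] link_sum_le_exp[OF y x]
    by (auto intro!: mult_left_mono[OF sum_mono \<open>0 \<le> a\<close>] simp: abs_le_iff)
  ultimately have "\<bar>exp (-A) - exp (-B)\<bar> \<le> exp (-1) * (real (k - 1) * L)"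
    using \<open>0 \<le> L\<close> by (intro exp_neg_diff_le) auto
  moreover have "(\<Prod>u\<in>e - {v}. F x u) - (\<Prod>u\<in>e - {v}. F y u) = c ^ (k - 1) * (exp (-A) - exp (-B))"
    unfolding prod_F_eq[OF e] A_def B_def a_def by (simp add: algebra_simps)
  ultimately show ?thesis using c_pos by (simp add: abs_mult mult_left_mono)
qed

lemma ln_F2_diff_le:
  assumes x: "\<And>u. u \<in> V \<Longrightarrow> 0 < x u" and y: "\<And>u. u \<in> V \<Longrightarrow> 0 < y u"
    and L: "\<And>u. u \<in> V \<Longrightarrow> \<bar>ln (x u) - ln (y u)\<bar> \<le> L" and "0 \<le> L"
    and v: "v \<in> V"
  shows "\<bar>ln (F (F x) v) - ln (F (F y) v)\<bar> \<le> rate * L"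
proof -
  define a where "a = \<zeta> / real \<Delta>"
  define K where "K = c ^ (k - 1) * (exp (-1) * (real (k - 1) * L))"
  have "0 \<le> a" using zeta_nonneg by (simp add: a_def)
  have deg: "a * real (hdeg E v) \<le> \<zeta>"
  proof (cases "\<Delta> = 0")
    case False
    then have "a * real (hdeg E v) \<le> a * real \<Delta>"
      using degree_le[OF v] \<open>0 \<le> a\<close> by (simp add: mult_left_mono)
    with False show ?thesis by (simp add: a_def)
  qed (simp add: a_def zeta_nonneg)
  have "ln (F (F x) v) - ln (F (F y) v) = a * (link_sum E (F y) v - link_sum E (F x) v)"
    using ln_F[OF v] by (simp add: a_def algebra_simps)
  also have "\<dots> = a * (\<Sum>e\<in>{e\<in>E. v \<in> e}. (\<Prod>u\<in>e - {v}. F y u) - (\<Prod>u\<in>e - {v}. F x u))"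
    unfolding link_sum_def by (simp add: sum_subtractf)
  finally have "\<bar>ln (F (F x) v) - ln (F (F y) v)\<bar>
      \<le> a * (\<Sum>e\<in>{e\<in>E. v \<in> e}. \<bar>(\<Prod>u\<in>e - {v}. F y u) - (\<Prod>u\<in>e - {v}. F x u)\<bar>)"
    using \<open>0 \<le> a\<close> by (simp add: abs_mult mult_left_mono)
  also have "\<dots> \<le> a * (\<Sum>e\<in>{e\<in>E. v \<in> e}. K)"
    unfolding K_def using prod_F_diff_le[OF y x] L \<open>0 \<le> L\<close> \<open>0 \<le> a\<close>
    by (intro mult_left_mono sum_mono) (auto simp: abs_minus_commute)
  also have "\<dots> = (a * real (hdeg E v)) * K" by (simp add: hdeg_def)
  also have "\<dots> \<le> \<zeta> * K"
    using deg c_pos \<open>0 \<le> L\<close> by (intro mult_right_mono) (simp_all add: K_def)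
  also have "\<dots> = rate * L" by (simp add: K_def rate_def)
  finally show ?thesis .
qed

lemma supnorm_ln_F2_le:
  assumes "x \<in> posvec V" "y \<in> posvec V"
  shows "supnorm V (\<lambda>v. ln (F (F x) v) - ln (F (F y) v))
           \<le> rate * supnorm V (\<lambda>v. ln (x v) - ln (y v))"
  using assms finite_V rate_nonneg
  by (intro supnorm_leI ln_F2_diff_le abs_le_supnorm supnorm_nonneg mult_nonneg_nonneg)
     (auto simp: posvec_def)

lemma F_fixpoint_unique:
  assumes "rate < 1"
    and x: "x \<in> posvec V" "F x = x" and y: "y \<in> posvec V" "F y = y"
  shows "x = y"
proof -
  let ?L = "supnorm V (\<lambda>v. ln (x v) - ln (y v))"
  have "?L \<le> rate * ?L" using supnorm_ln_F2_le[OF x(1) y(1)] x(2) y(2) by simp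
  then have "?L = 0"
    using \<open>rate < 1\<close> supnorm_nonneg[OF finite_V] by (smt (verit) mult_le_cancel_right1)
  then have "ln (x v) = ln (y v)" if "v \<in> V" for v
    using abs_le_supnorm[OF finite_V that, of "\<lambda>v. ln (x v) - ln (y v)"] by simp
  then show ?thesis
    using x(1) y(1) by (intro extensionalityI[of _ V]) (auto simp: posvec_def)
qed

lemma F_fixpoint_exists:
  assumes "rate < 1"
  obtains x where "x \<in> posvec V" "F x = x"
proof -
  \<comment> \<open>F in logarithmic coordinates, acting on the complete space of bounded functions\<close>
  define logF where "logF a = restrict (\<lambda>v. ln (F (\<lambda>u. exp (a u)) v)) V" for a
  have exp_logF: "exp (logF a v) = F (\<lambda>u. exp (a u)) v" if "v \<in> V" for a v
    using that F_pos by (simp add: logF_def)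
  have logF2: "logF (logF a) v = ln (F (F (\<lambda>u. exp (a u))) v)" if "v \<in> V" for a v
    using that exp_logF F_cong[of "\<lambda>u. exp (logF a u)"] by (simp add: logF_def)
  interpret B: Metric_space "Met_TC.fspace V :: ('a \<Rightarrow> real) set" "Met_TC.fdist V"
    by (rule Met_TC.Metric_space_funspace)
  note in_B = restrict_in_real_fspace[OF finite_V]
  then have maps: "logF \<in> Met_TC.fspace V \<rightarrow> Met_TC.fspace V"
    by (simp add: logF_def)
  have contr: "Met_TC.fdist V (logF (logF a)) (logF (logF b)) \<le> rate * Met_TC.fdist V a b"
    if a: "a \<in> Met_TC.fspace V" and b: "b \<in> Met_TC.fspace V" for a b
  proof (cases "V = {}")
    case False
    have "\<forall>u\<in>V. dist (a u) (b u) \<le> Met_TC.fdist V a b"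
      using Met_TC.funspace_mdist_le[OF a b False, of "Met_TC.fdist V a b"] by simp
    then have "\<forall>v\<in>V. dist (logF (logF a) v) (logF (logF b) v) \<le> rate * Met_TC.fdist V a b"
      using B.nonneg[of a b] by (auto simp: logF2 dist_real_def intro!: ln_F2_diff_le)
    then show ?thesis
      using Met_TC.funspace_mdist_le[OF in_B in_B False] by (simp add: logF_def)
  qed (simp add: Met_TC.fdist_def)
  obtain a where "a \<in> Met_TC.fspace V" "logF a = a"
    using B.fixpoint_if_square_contraction[OF mcomplete_real_fspace _ maps \<open>rate < 1\<close> contr] in_B
    by blast
  define x where "x = restrict (\<lambda>u. exp (a u)) V"
  have "F x = F (\<lambda>u. exp (a u))" by (rule F_cong) (simp add: x_def)
  then have "F x v = x v" if "v \<in> V" for v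
    using exp_logF[OF that, of a] \<open>logF a = a\<close> that by (simp add: x_def)
  then have "F x = x"
    by (intro extensionalityI[of _ V]) (simp_all add: F_link_sum x_def)
  moreover have "x \<in> posvec V" by (simp add: x_def posvec_def)
  ultimately show thesis using that by blast
qed

end

theorem mainTheorem12:
  fixes k \<Delta> :: nat and c \<zeta> :: real and V :: "'a set" and E :: "'a set set"
  assumes "k \<ge> 2" and "c > 0" and "0 < \<zeta>" and "\<zeta> \<le> 1"
    and "\<zeta> * real (k - 1) * c ^ (k - 1) < exp 1"
    and "uniform_hypergraph k V E"
    and "\<forall>v\<in>V. hdeg E v \<le> \<Delta>"
  shows "(\<forall>x\<in>posvec V. \<forall>y\<in>posvec V.
           supnorm V (\<lambda>v. ln ((Fmap V E c \<zeta> \<Delta> \<circ> Fmap V E c \<zeta> \<Delta>) x v)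
                        - ln ((Fmap V E c \<zeta> \<Delta> \<circ> Fmap V E c \<zeta> \<Delta>) y v))
           \<le> (1 - (1 - \<zeta> * c ^ (k - 1) * real (k - 1) * exp (-1)))
              * supnorm V (\<lambda>v. ln (x v) - ln (y v)))
         \<and> (\<exists>!x. x \<in> posvec V \<and> Fmap V E c \<zeta> \<Delta> x = x)"
proof -
  interpret hypergraph_map k V E c \<zeta> \<Delta>
    using assms by unfold_locales auto
  have "rate < 1"
    using assms(5) by (simp add: rate_def exp_minus field_simps)
  moreover obtain x where "x \<in> posvec V" "F x = x"
    using F_fixpoint_exists[OF \<open>rate < 1\<close>] .
  ultimately show ?thesis
    using supnorm_ln_F2_le F_fixpoint_unique by (auto simp: rate_def)
qed

end
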